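(* For every simple graph $\Gamma$ on $[n]$ and every $m\in\mathbb{N}$, the weighted integer points enumerator of the $m$-graph polytope equals the image of the $1$-uniform decorated graph under the universal morphism: $F_q(Q_{\Gamma,m})=\Psi^m_q(\Gamma^{\mathbf 1})$.
   Context: Let $\Gamma=([n],E)$ be a simple graph and $m\in\mathbb{N}$. For $S\subseteq[n]$ let $\Delta_S=\mathrm{conv}\{e_s: s\in S\}$. Let $\mathsf{H}_m(\Gamma)=\{S\subseteq[n]: |S|\le m+1,\ \Gamma|_S \text{ connected}\}$ and define the $m$-graph polytope $Q_{\Gamma,m}=\sum_{S\in\mathsf{H}_m(\Gamma)}\Delta_S$. Faces of the permutohedron $Pe^{n-1}$ are identified with flags $\mathcal{F}:\emptyset=F_0\subset F_1\subset\cdots\subset F_k=[n]$; $M_\mathcal{F}$ denotes the monomial quasisymmetric function $M_{\alpha}$ with $\alpha=(|F_1|-|F_0|,\ldots,|F_k|-|F_{k-1}|)$, and $L(Pe^{n-1})$ the set of all such flags. For a hypergraph $\mathsf{H}$ on $[n]$, restriction is $\mathsf{H}|_F=\{H\in\mathsf{H}: H\subseteq F\}$, contraction is $\mathsf{H}/F=\{H\setminus F: H\in\mathsf{H}\}$, $\mathsf{H}/\mathcal{F}=\bigsqcup_{i=1}^k(\mathsf{H}|_{F_i})/F_{i-1}$, and $\mathsf{rk}(\mathsf{H}/\mathcal{F})=n-c(\mathsf{H}/\mathcal{F})$ with $c$ the number of connected components. The weighted integer points enumerator is $F_q(Q_{\mathsf{H}})=\sum_{\mathcal{F}\in L(Pe^{n-1})}q^{\mathsf{rk}(\mathsf{H}/\mathcal{F})}M_\mathcal{F}$,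 and $F_q(Q_{\Gamma,m})=F_q(Q_{\mathsf{H}_m(\Gamma)})$. A decorated graph $\Gamma^w=([n],E,w)$ has edge decoration $w:E\to\mathbb{N}$; $\Gamma^{\mathbf 1}$ is the decorated graph with $w\equiv 1$. The ripping $\Gamma^w|_S$ is the induced decorated subgraph on $S$; the sewing $\Gamma^w/S$ is the induced subgraph on $[n]\setminus S$ together with additional edges $uv$ for all $u,v\in[n]\setminus S$ joined by an edge path whose interior vertices lie in $S$, decorated by the minimal sum of decorations over such paths. $\mathrm{pr}_m$ deletes all edges with decoration greater than $m$. The graded Hopf algebra $\mathcal{G}^{W,m}$ on isomorphism classes of decorated graphs has product disjoint union and coproduct $\Delta_m(\Gamma^w)=\sum_{S\subseteq[n]}\mathrm{pr}_m(\Gamma^w|_S)\otimes\mathrm{pr}_m(\Gamma^w/S)$; with character $\zeta_q(\Gamma^w)=q^{n-c(\Gamma^w)}$ it is a combinatorial Hopf algebra, and $\Psi^m_q:(\mathcal{G}^{W,m},\zeta_q)\to(\mathcal{Q}Sym,\zeta)$ is the unique morphism of combinatorial Hopf algebras (Aguiar–Bergeron–Sottile). Explicitly, $\Psi^m_q(\Gamma^w)=\sum_{\mathcal{F}\in L(Pe^{n-1})}q^{\mathsf{rk}_m(\Gamma^w/\mathcal{F})}M_\mathcal{F}$, where $\mathsf{rk}_m(\Gamma^w/\mathcal{F})=n-\sum_{i=1}^k c(\mathrm{pr}_m(\Gamma^w|_{F_i}/F_{i-1}))$. *)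

theory Defs
  imports "HOL-Computational_Algebra.Polynomial"
begin

text \<open>Adjacency relation of a hypergraph with vertex set V and hyperedges H:
  two vertices are related if they lie in a common hyperedge.
  A graph is the special case where all hyperedges are 2-sets.\<close>
definition hrel :: "nat set \<Rightarrow> nat set set \<Rightarrow> (nat \<times> nat) set" where
  "hrel V H = {(x, y). x \<in> V \<and> y \<in> V \<and> (\<exists>h\<in>H. x \<in> h \<and> y \<in> h)}"

definition ncomp :: "nat set \<Rightarrow> nat set set \<Rightarrow> nat" where
  "ncomp V H = card (V // ((hrel V H)\<^sup>*))"

text \<open>A flag \<emptyset> = F0 \<subset> F1 \<subset> ... \<subset> Fk = [n] is represented by the list [F1,...,Fk].\<close>
definition flags :: "nat \<Rightarrow> nat set list set" where
  "flags n = {Fs. sorted_wrt (\<subset>) ({} # Fs) \<and> last ({} # Fs) = {1..n}}"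

definition flag_comp :: "nat set list \<Rightarrow> nat list" where
  "flag_comp Fs = map (\<lambda>i. card (Fs ! i) - card (({} # Fs) ! i)) [0..<length Fs]"

text \<open>A quasisymmetric function with coefficients in Z[q] is represented by its
  coefficient function in the monomial basis M_alpha (alpha a composition).
  qsym_of n r is the element  sum over flags F of q^(r F) M_F.\<close>
type_synonym qsym = "nat list \<Rightarrow> int poly"

definition qsym_of :: "nat \<Rightarrow> (nat set list \<Rightarrow> nat) \<Rightarrow> qsym" where
  "qsym_of n r = (\<lambda>\<alpha>. \<Sum>Fs\<in>{Fs\<in>flags n. flag_comp Fs = \<alpha>}. monom 1 (r Fs))"

definition hyp_rk :: "nat \<Rightarrow> nat set set \<Rightarrow> nat set list \<Rightarrow> nat" where
  "hyp_rk n H Fs = n - (\<Sum>i<length Fs.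
      ncomp (Fs ! i - ({} # Fs) ! i) {h - ({} # Fs) ! i | h. h \<in> H \<and> h \<subseteq> Fs ! i})"

definition Fq_hyp :: "nat \<Rightarrow> nat set set \<Rightarrow> qsym" where
  "Fq_hyp n H = qsym_of n (hyp_rk n H)"

definition simple_graph :: "nat \<Rightarrow> nat set set \<Rightarrow> bool" where
  "simple_graph n E \<longleftrightarrow> (\<forall>e\<in>E. e \<subseteq> {1..n} \<and> card e = 2)"

definition Hm :: "nat \<Rightarrow> nat set set \<Rightarrow> nat \<Rightarrow> nat set set" where
  "Hm n E m = {S. S \<subseteq> {1..n} \<and> card S \<le> m + 1 \<and>
                  ncomp S {e\<in>E. e \<subseteq> S} = 1}"

type_synonym dgraph = "nat set \<times> nat set set \<times> (nat set \<Rightarrow> nat)"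

definition rip :: "dgraph \<Rightarrow> nat set \<Rightarrow> dgraph" where
  "rip G S = (case G of (V, E, w) \<Rightarrow> (S, {e\<in>E. e \<subseteq> S}, w))"

definition sew_walk :: "nat set set \<Rightarrow> nat set \<Rightarrow> nat \<Rightarrow> nat \<Rightarrow> nat list \<Rightarrow> bool" where
  "sew_walk E S u v ps \<longleftrightarrow> length ps \<ge> 2 \<and> hd ps = u \<and> last ps = v \<and>
     (\<forall>i < length ps - 1. {ps ! i, ps ! Suc i} \<in> E) \<and> set (butlast (tl ps)) \<subseteq> S"

definition walk_weight :: "(nat set \<Rightarrow> nat) \<Rightarrow> nat list \<Rightarrow> nat" where
  "walk_weight w ps = (\<Sum>i < length ps - 1. w {ps ! i, ps ! Suc i})"

definition sew :: "dgraph \<Rightarrow> nat set \<Rightarrow> dgraph" where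
  "sew G S = (case G of (V, E, w) \<Rightarrow>
     (V - S,
      {{u, v} | u v. u \<in> V - S \<and> v \<in> V - S \<and> u \<noteq> v \<and> (\<exists>ps. sew_walk E S u v ps)},
      (\<lambda>e. LEAST s. \<exists>u v ps. e = {u, v} \<and> u \<in> V - S \<and> v \<in> V - S \<and> u \<noteq> v \<and>
                 sew_walk E S u v ps \<and> s = walk_weight w ps)))"

definition pr :: "nat \<Rightarrow> dgraph \<Rightarrow> dgraph" where
  "pr m G = (case G of (V, E, w) \<Rightarrow> (V, {e\<in>E. w e \<le> m}, w))"

definition dcomp :: "dgraph \<Rightarrow> nat" where
  "dcomp G = (case G of (V, E, w) \<Rightarrow> ncomp V E)"

definition rk_m :: "nat \<Rightarrow> nat \<Rightarrow> dgraph \<Rightarrow> nat set list \<Rightarrow> nat" where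
  "rk_m m n G Fs = n - (\<Sum>i<length Fs. dcomp (pr m (sew (rip G (Fs ! i)) (({} # Fs) ! i))))"

definition Psi :: "nat \<Rightarrow> nat \<Rightarrow> dgraph \<Rightarrow> qsym" where
  "Psi m n G = qsym_of n (rk_m m n G)"

definition one_dec :: "nat \<Rightarrow> nat set set \<Rightarrow> dgraph" where
  "one_dec n E = ({1..n}, E, (\<lambda>_. 1))"

end

theory Submission
  imports Defs
begin

text \<open>Both sides are sums over the same flags, so it suffices to compare, for each step
  \<open>S = F\<^sub>i\<^sub>-\<^sub>1 \<subset> T = F\<^sub>i\<close>, the connected components on \<open>T - S\<close> of the hypergraph
  \<open>(H\<^sub>m(\<Gamma>)|\<^sub>T)/S\<close> and of the graph \<open>pr\<^sub>m(\<Gamma>\<^sup>1|\<^sub>T / S)\<close>. With unit decorations, \<open>uv\<close> is an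
  edge of the latter iff \<open>u, v\<close> are joined in \<open>\<Gamma>|\<^sub>T\<close> by a walk with at most \<open>m\<close> edges whose
  interior lies in \<open>S\<close>. The vertex set of such a walk is a connected set of at most \<open>m + 1\<close>
  vertices, i.e. a hyperedge of \<open>H\<^sub>m(\<Gamma>)\<close> containing \<open>u\<close> and \<open>v\<close>. Conversely, two vertices of
  a hyperedge \<open>h\<close> are joined by a simple path in \<open>\<Gamma>|\<^sub>h\<close>, which has at most \<open>m + 1\<close>
  vertices; cutting it at its vertices outside \<open>S\<close> gives a chain of such edges. So the two
  adjacency relations generate the same equivalence relation on \<open>T - S\<close>.\<close>

abbreviation is_walk :: "'a set set \<Rightarrow> 'a list \<Rightarrow> bool" where
  "is_walk Ed ps \<equiv> successively (\<lambda>a b. {a, b} \<in> Ed) ps"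

lemma walk_vertices_subset:
  "is_walk Ed ps \<Longrightarrow> 2 \<le> length ps \<Longrightarrow> set ps \<subseteq> \<Union>Ed"
proof (induction ps rule: induct_list012)
  case (3 x y zs)
  then have "set (y # zs) \<subseteq> \<Union>Ed"
    by (cases zs) auto
  with "3.prems"(1) show ?case by auto
qed simp_all

lemma successively_distinct_shortcut:
  assumes "ps \<noteq> []" "successively P ps"
  shows "\<exists>qs. qs \<noteq> [] \<and> hd qs = hd ps \<and> last qs = last ps \<and> set qs \<subseteq> set ps \<and>
    successively P qs \<and> distinct qs"
  using assms
proof (induction "length ps" arbitrary: ps rule: less_induct)
  case less
  show ?case
  proof (cases "distinct ps")
    case False
    then obtain xs y ys zs where ps: "ps = xs @ y # ys @ y # zs"
      using not_distinct_decomp by fastforce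
    let ?ps' = "xs @ y # zs"
    have "successively P (xs @ [y])" "successively P (y # zs)"
      using less.prems(2) successively_append_iff[of P "y # ys" "y # zs"]
      unfolding ps by (auto simp: successively_append_iff)
    then have "successively P ?ps'"
      by (auto simp: successively_append_iff)
    moreover have "length ?ps' < length ps" "?ps' \<noteq> []" using ps by auto
    ultimately obtain qs where "qs \<noteq> []" "hd qs = hd ?ps'" "last qs = last ?ps'"
      "set qs \<subseteq> set ?ps'" "successively P qs" "distinct qs"
      using less.hyps by blast
    moreover have "hd ?ps' = hd ps" using ps by (cases xs) simp_all
    moreover have "last ?ps' = last ps" using ps by (cases zs) simp_all
    moreover have "set ?ps' \<subseteq> set ps" using ps by auto
    ultimately show ?thesis by (intro exI[of _ qs]) auto
  qed (use less.prems in \<open>intro exI[of _ ps], simp\<close>)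
qed

lemma hrelI: "x \<in> V \<Longrightarrow> y \<in> V \<Longrightarrow> h \<in> H \<Longrightarrow> x \<in> h \<Longrightarrow> y \<in> h \<Longrightarrow> (x, y) \<in> hrel V H"
  unfolding hrel_def by blast

lemma hrelE:
  assumes "(x, y) \<in> hrel V H"
  obtains h where "x \<in> V" "y \<in> V" "h \<in> H" "x \<in> h" "y \<in> h"
  using assms unfolding hrel_def by blast

lemma sym_hrel: "sym (hrel V H)"
  by (auto simp: sym_def hrel_def)

lemma ncomp_eq_1I:
  assumes "a \<in> V" "\<And>x. x \<in> V \<Longrightarrow> (a, x) \<in> (hrel V H)\<^sup>*"
  shows "ncomp V H = 1"
proof -
  let ?r = "(hrel V H)\<^sup>*"
  have "?r `` {x} = ?r `` {a}" if "x \<in> V" for x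
  proof -
    have "(a, x) \<in> ?r" "(x, a) \<in> ?r"
      using assms(2)[OF that] sym_rtrancl[OF sym_hrel] by (auto dest: symD)
    then show ?thesis by (blast intro: rtrancl_trans)
  qed
  then have "V // ?r = {?r `` {a}}"
    using assms(1) unfolding quotient_def by blast
  then show ?thesis unfolding ncomp_def by simp
qed

lemma ncomp_eq_1D:
  assumes "ncomp V H = 1" "x \<in> V" "y \<in> V"
  shows "(x, y) \<in> (hrel V H)\<^sup>*"
proof -
  let ?r = "(hrel V H)\<^sup>*"
  obtain C where "V // ?r = {C}"
    using assms(1) unfolding ncomp_def by (meson card_1_singletonE)
  moreover have "?r `` {x} \<in> V // ?r" "?r `` {y} \<in> V // ?r"
    using assms(2,3) by (auto intro: quotientI)
  ultimately have "?r `` {x} = ?r `` {y}" by auto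
  then show ?thesis by auto
qed

lemma ncomp_cong_rtrancl:
  assumes "hrel V H \<subseteq> (hrel V H')\<^sup>*" "hrel V H' \<subseteq> (hrel V H)\<^sup>*"
  shows "ncomp V H = ncomp V H'"
proof -
  have "(hrel V H)\<^sup>* = (hrel V H')\<^sup>*"
    using rtrancl_subset_rtrancl[OF assms(1)] rtrancl_subset_rtrancl[OF assms(2)] by blast
  then show ?thesis unfolding ncomp_def by simp
qed

lemma walk_rtrancl_hrel:
  assumes "is_walk E ps" "set ps \<subseteq> V" "x \<in> set ps"
  shows "(hd ps, x) \<in> (hrel V {e \<in> E. e \<subseteq> V})\<^sup>*"
  using assms
proof (induction ps)
  case (Cons a ps)
  show ?case
  proof (cases "x = a")
    case False
    then have ne: "ps \<noteq> []" and x: "x \<in> set ps" using Cons.prems(3) by auto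
    then have "(a, hd ps) \<in> hrel V {e \<in> E. e \<subseteq> V}"
      using Cons.prems(1,2) by (intro hrelI[of _ _ _ "{a, hd ps}"]) (auto simp: successively_Cons)
    moreover have "(hd ps, x) \<in> (hrel V {e \<in> E. e \<subseteq> V})\<^sup>*"
      using Cons.IH Cons.prems ne x by (simp add: successively_Cons)
    ultimately show ?thesis by (simp add: converse_rtrancl_into_rtrancl)
  qed simp
qed simp

lemma rtrancl_hrel_walk:
  assumes "(x, y) \<in> (hrel V Ed)\<^sup>*" "\<forall>e\<in>Ed. card e = 2" "x \<in> V"
  shows "\<exists>ps. ps \<noteq> [] \<and> hd ps = x \<and> last ps = y \<and> set ps \<subseteq> V \<and> is_walk Ed ps"
  using assms(1)
proof (induction rule: rtrancl_induct)
  case base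
  then show ?case using assms(3) by (intro exI[of _ "[x]"]) auto
next
  case (step y z)
  then obtain ps where ps: "ps \<noteq> []" "hd ps = x" "last ps = y" "set ps \<subseteq> V" "is_walk Ed ps"
    by blast
  obtain e where e: "e \<in> Ed" "y \<in> e" "z \<in> e" "z \<in> V"
    using step.hyps(2) by (auto elim: hrelE)
  show ?case
  proof (cases "y = z")
    case False
    then have "{y, z} \<in> Ed"
    proof -
      obtain a b where "e = {a, b}" using e(1) assms(2) by (meson card_2_iff)
      then show ?thesis using e False by (auto simp: insert_commute)
    qed
    then show ?thesis
      using ps e by (intro exI[of _ "ps @ [z]"]) (auto simp: successively_append_iff)
  qed (use ps in blast)
qed

lemma sew_walk_iff:
  "sew_walk E S u v ps \<longleftrightarrow> 2 \<le> length ps \<and> hd ps = u \<and> last ps = v \<and> is_walk E ps \<and>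
     set (butlast (tl ps)) \<subseteq> S"
  by (auto simp: sew_walk_def successively_conv_nth)

lemma walk_weight_unit: "walk_weight (\<lambda>_. 1) ps = length ps - 1"
  by (simp add: walk_weight_def)

text \<open>In the notation of the paper, \<open>hyp_minor H T S\<close> is \<open>(H|\<^sub>T)/S\<close> and
  \<open>sewn_edges E T S m\<close> is the edge set of \<open>pr\<^sub>m(\<Gamma>\<^sup>1|\<^sub>T / S)\<close>.\<close>
abbreviation hyp_minor :: "nat set set \<Rightarrow> nat set \<Rightarrow> nat set \<Rightarrow> nat set set" where
  "hyp_minor H T S \<equiv> {h - S | h. h \<in> H \<and> h \<subseteq> T}"

definition sewn_edges :: "nat set set \<Rightarrow> nat set \<Rightarrow> nat set \<Rightarrow> nat \<Rightarrow> nat set set" where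
  "sewn_edges E T S m = {{u, v} | u v. u \<in> T - S \<and> v \<in> T - S \<and> u \<noteq> v \<and>
     (\<exists>ps. sew_walk {e \<in> E. e \<subseteq> T} S u v ps \<and> length ps \<le> m + 1)}"

lemma dcomp_pr_sew_rip_one_dec:
  "dcomp (pr m (sew (rip (one_dec n E) T) S)) = ncomp (T - S) (sewn_edges E T S m)"
proof -
  let ?E = "{e \<in> E. e \<subseteq> T}"
  let ?P = "\<lambda>e s. \<exists>u v ps. e = {u, v} \<and> u \<in> T - S \<and> v \<in> T - S \<and> u \<noteq> v \<and>
    sew_walk ?E S u v ps \<and> s = length ps - 1"
  have "{e \<in> {{u, v} | u v. u \<in> T - S \<and> v \<in> T - S \<and> u \<noteq> v \<and> (\<exists>ps. sew_walk ?E S u v ps)}.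
      (LEAST s. ?P e s) \<le> m} = sewn_edges E T S m" (is "?lhs = _")
  proof (intro set_eqI iffI)
    fix e assume "e \<in> ?lhs"
    then have "\<exists>s. ?P e s" "(LEAST s. ?P e s) \<le> m" by auto
    then obtain u v ps where "e = {u, v}" "u \<in> T - S" "v \<in> T - S" "u \<noteq> v"
      "sew_walk ?E S u v ps" "length ps - 1 \<le> m"
      using LeastI_ex[of "?P e"] by auto
    moreover from \<open>sew_walk ?E S u v ps\<close> have "2 \<le> length ps" by (simp add: sew_walk_iff)
    ultimately have "length ps \<le> m + 1" by linarith
    with \<open>e = {u, v}\<close> \<open>u \<in> T - S\<close> \<open>v \<in> T - S\<close> \<open>u \<noteq> v\<close> \<open>sew_walk ?E S u v ps\<close>
    show "e \<in> sewn_edges E T S m"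
      unfolding sewn_edges_def by blast
  next
    fix e assume "e \<in> sewn_edges E T S m"
    then obtain u v ps where uv: "e = {u, v}" "u \<in> T - S" "v \<in> T - S" "u \<noteq> v"
      and ps: "sew_walk ?E S u v ps" "length ps \<le> m + 1"
      unfolding sewn_edges_def by blast
    then have "(LEAST s. ?P e s) \<le> length ps - 1" by (intro Least_le) blast
    then show "e \<in> ?lhs" using uv ps by auto
  qed
  then show ?thesis
    unfolding dcomp_def pr_def sew_def rip_def one_dec_def prod.case walk_weight_unit by simp
qed

lemma in_set_butlast_tl_split:
  assumes "z \<in> set (butlast (tl ps))"
  shows "\<exists>xs ys. ps = xs @ z # ys \<and> xs \<noteq> [] \<and> ys \<noteq> []"
proof -
  obtain a rest where ps: "ps = a # rest"
    using assms by (cases ps) auto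
  moreover have "rest \<noteq> []"
    using assms ps by auto
  moreover obtain as bs where "butlast rest = as @ z # bs"
    using assms ps split_list by fastforce
  ultimately have "ps = (a # as) @ z # (bs @ [last rest])"
    by (metis append_butlast_last_id append.assoc append_Cons)
  then show ?thesis by blast
qed

lemma walk_rtrancl_sewn_edges:
  assumes "is_walk {e \<in> E. e \<subseteq> T} ps" "ps \<noteq> []" "length ps \<le> m + 1"
    "hd ps \<notin> S" "last ps \<notin> S"
  shows "(hd ps, last ps) \<in> (hrel (T - S) (sewn_edges E T S m))\<^sup>*"
  using assms
proof (induction "length ps" arbitrary: ps rule: less_induct)
  case less
  show ?case
  proof (cases "set (butlast (tl ps)) \<subseteq> S")
    case interior: True
    show ?thesis
    proof (cases "hd ps = last ps")
      case False
      then have len: "2 \<le> length ps"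
        using less.prems(2) by (cases ps) (auto split: if_splits simp: Suc_le_eq)
      then have "set ps \<subseteq> T"
        using walk_vertices_subset[OF less.prems(1)] by blast
      then have ends: "hd ps \<in> T - S" "last ps \<in> T - S"
        using less.prems(2,4,5) by auto
      moreover have "sew_walk {e \<in> E. e \<subseteq> T} S (hd ps) (last ps) ps"
        using len less.prems(1) interior by (simp add: sew_walk_iff)
      ultimately have "{hd ps, last ps} \<in> sewn_edges E T S m"
        using False less.prems(3) unfolding sewn_edges_def by blast
      then show ?thesis
        using ends by (intro r_into_rtrancl hrelI[of _ _ _ "{hd ps, last ps}"]) auto
    qed simp
  next
    case False
    then obtain z where z: "z \<in> set (butlast (tl ps))" "z \<notin> S" by auto
    obtain xs ys where ps: "ps = xs @ z # ys" "xs \<noteq> []" "ys \<noteq> []"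
      using in_set_butlast_tl_split[OF z(1)] by blast
    have walks: "is_walk {e \<in> E. e \<subseteq> T} (xs @ [z])" "is_walk {e \<in> E. e \<subseteq> T} (z # ys)"
      using less.prems(1) unfolding ps(1) by (simp_all add: successively_append_iff)
    have "(hd ps, z) \<in> (hrel (T - S) (sewn_edges E T S m))\<^sup>*"
      using less.hyps[OF _ walks(1)] less.prems ps z(2) by simp
    moreover have "(z, last ps) \<in> (hrel (T - S) (sewn_edges E T S m))\<^sup>*"
      using less.hyps[OF _ walks(2)] less.prems ps z(2) by simp
    ultimately show ?thesis
      by (rule rtrancl_trans)
  qed
qed

lemma hrel_sewn_edges_subset_hyp_minor_Hm:
  assumes "simple_graph n E"
  shows "hrel (T - S) (sewn_edges E T S m) \<subseteq> hrel (T - S) (hyp_minor (Hm n E m) T S)"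
proof (clarify)
  fix x y assume "(x, y) \<in> hrel (T - S) (sewn_edges E T S m)"
  then obtain e where xy: "x \<in> T - S" "y \<in> T - S" and e: "e \<in> sewn_edges E T S m" "x \<in> e" "y \<in> e"
    by (rule hrelE)
  then obtain u v ps where "e = {u, v}" and walk: "sew_walk {e \<in> E. e \<subseteq> T} S u v ps"
    and len: "length ps \<le> m + 1"
    unfolding sewn_edges_def by blast
  then have "2 \<le> length ps" "hd ps = u" "last ps = v" and ps: "is_walk {e \<in> E. e \<subseteq> T} ps"
    by (auto simp: sew_walk_iff)
  then have "ps \<noteq> []" by auto
  have "set ps \<subseteq> \<Union>{e \<in> E. e \<subseteq> T}"
    using walk_vertices_subset[OF ps \<open>2 \<le> length ps\<close>] .
  then have "set ps \<subseteq> T" "set ps \<subseteq> {1..n}"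
    using assms unfolding simple_graph_def by auto
  moreover have "ncomp (set ps) {e \<in> E. e \<subseteq> set ps} = 1"
  proof (rule ncomp_eq_1I)
    show "hd ps \<in> set ps" using \<open>ps \<noteq> []\<close> by simp
    have "is_walk E ps" using ps by (rule successively_mono) auto
    then show "(hd ps, z) \<in> (hrel (set ps) {e \<in> E. e \<subseteq> set ps})\<^sup>*" if "z \<in> set ps" for z
      using walk_rtrancl_hrel[OF _ order_refl that] by simp
  qed
  moreover have "card (set ps) \<le> m + 1"
    using len card_length[of ps] by linarith
  ultimately have "set ps - S \<in> hyp_minor (Hm n E m) T S"
    unfolding Hm_def by blast
  moreover have "x \<in> set ps - S" "y \<in> set ps - S"
    using xy e \<open>e = {u, v}\<close> \<open>hd ps = u\<close> \<open>last ps = v\<close> \<open>ps \<noteq> []\<close> by auto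
  ultimately show "(x, y) \<in> hrel (T - S) (hyp_minor (Hm n E m) T S)"
    using xy by (intro hrelI)
qed

lemma hrel_hyp_minor_Hm_subset_rtrancl_sewn_edges:
  assumes "simple_graph n E"
  shows "hrel (T - S) (hyp_minor (Hm n E m) T S) \<subseteq> (hrel (T - S) (sewn_edges E T S m))\<^sup>*"
proof (clarify)
  fix x y assume "(x, y) \<in> hrel (T - S) (hyp_minor (Hm n E m) T S)"
  then obtain h' where xy: "x \<in> T - S" "y \<in> T - S"
    and "h' \<in> hyp_minor (Hm n E m) T S" "x \<in> h'" "y \<in> h'"
    by (rule hrelE)
  then obtain h where h: "h \<in> Hm n E m" "h \<subseteq> T" "x \<in> h" "y \<in> h"
    by auto
  from h(1) have "finite h" "card h \<le> m + 1" and conn: "ncomp h {e \<in> E. e \<subseteq> h} = 1"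
    unfolding Hm_def by (auto intro: finite_subset)
  have "\<forall>e \<in> {e \<in> E. e \<subseteq> h}. card e = 2"
    using assms unfolding simple_graph_def by auto
  then obtain ps where "ps \<noteq> []" "hd ps = x" "last ps = y" "set ps \<subseteq> h"
    "is_walk {e \<in> E. e \<subseteq> h} ps"
    using rtrancl_hrel_walk[OF ncomp_eq_1D[OF conn h(3,4)] _ h(3)] by blast
  then obtain qs where qs: "qs \<noteq> []" "hd qs = x" "last qs = y" "set qs \<subseteq> h"
    "is_walk {e \<in> E. e \<subseteq> h} qs" "distinct qs"
    using successively_distinct_shortcut[of ps "\<lambda>a b. {a, b} \<in> {e \<in> E. e \<subseteq> h}"] by auto
  have "length qs \<le> m + 1"
    using distinct_card[OF qs(6)] card_mono[OF \<open>finite h\<close> qs(4)] \<open>card h \<le> m + 1\<close> by linarith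
  moreover have "is_walk {e \<in> E. e \<subseteq> T} qs"
    using qs(5) by (rule successively_mono) (use h(2) in auto)
  ultimately have "(hd qs, last qs) \<in> (hrel (T - S) (sewn_edges E T S m))\<^sup>*"
    using xy qs(1-3) by (intro walk_rtrancl_sewn_edges) auto
  then show "(x, y) \<in> (hrel (T - S) (sewn_edges E T S m))\<^sup>*"
    using qs(2,3) by simp
qed

lemma ncomp_hyp_minor_Hm_eq_sewn_edges:
  assumes "simple_graph n E"
  shows "ncomp (T - S) (hyp_minor (Hm n E m) T S) = ncomp (T - S) (sewn_edges E T S m)"
proof (rule ncomp_cong_rtrancl)
  show "hrel (T - S) (hyp_minor (Hm n E m) T S) \<subseteq> (hrel (T - S) (sewn_edges E T S m))\<^sup>*"
    using assms by (rule hrel_hyp_minor_Hm_subset_rtrancl_sewn_edges)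
  show "hrel (T - S) (sewn_edges E T S m) \<subseteq> (hrel (T - S) (hyp_minor (Hm n E m) T S))\<^sup>*"
    by (rule order_trans[OF hrel_sewn_edges_subset_hyp_minor_Hm[OF assms]]) auto
qed

theorem mainTheorem2:
  fixes n m :: nat and E :: "nat set set"
  assumes "simple_graph n E"
  shows "Fq_hyp n (Hm n E m) = Psi m n (one_dec n E)"
proof -
  have "hyp_rk n (Hm n E m) = rk_m m n (one_dec n E)"
    unfolding hyp_rk_def rk_m_def
    by (simp only: dcomp_pr_sew_rip_one_dec ncomp_hyp_minor_Hm_eq_sewn_edges[OF assms])
  then show ?thesis
    unfolding Fq_hyp_def Psi_def by (rule arg_cong)
qed

end
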